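(* Let $n_1,n_2,n_3$ be pairwise coprime positive integers forming a minimal system of generators of $\mathcal S=\langle n_1,n_2,n_3\rangle$, and let $\{i,j,k\}=\{1,2,3\}$. Let $\lambda_{ij}=[-n_in_j^{-1}]_{n_k}$, $\lambda_{ik}=[-n_in_k^{-1}]_{n_j}$ (so that $n_i=n_jn_k-\lambda_{ij}n_j-\lambda_{ik}n_k$), and put $N_i=n_jn_k-\lambda_{ij}n_j-n_k$. Let $\mathcal T_k=\{x\in\mathbb N: xn_k\in\langle n_j,N_i\rangle\}$. Then $$\mathcal S_k=\{\,x-(\lambda_{ik}-1)[-x]_{n_j}\ :\ x\in\mathcal T_k\,\}.$$
   Context: $\mathbb N$ denotes the nonnegative integers. For integers $a_1,\dots,a_r$, $\langle a_1,\dots,a_r\rangle=\{\sum t_la_l: t_l\in\mathbb N\}$. Minimal system of generators means that no $n_l$ belongs to the monoid generated by the other two. For an integer $m$ and $n\ge 1$, $[m]_n\in\{0,\dots,n-1\}$ denotes the remainder of $m$ upon division by $n$; for $a$ coprime to $n$, the symbol $a^{-1}$ inside $[\cdot]_n$ denotes a multiplicative inverse of $a$ modulo $n$. For $\{i,j,k\}=\{1,2,3\}$, $\mathcal S_k=\{M\in\mathbb N: Mn_k\in\langle n_i,n_j\rangle\}$ and $c_k=\min(\mathcal S_k\setminus\{0\})$ (the minimal relation for $n_k$). *)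

theory Defs
  imports "HOL-Number_Theory.Number_Theory"
begin

definition gen2 :: "int \<Rightarrow> int \<Rightarrow> int set" where
  "gen2 a b = {int s * a + int t * b | s t :: nat. True}"

definition Sset :: "int \<Rightarrow> int \<Rightarrow> int \<Rightarrow> nat set" where
  "Sset ni nj nk = {M :: nat. int M * nk \<in> gen2 ni nj}"

definition lam :: "int \<Rightarrow> int \<Rightarrow> int \<Rightarrow> int" where
  "lam m n p = (- m * modular_inverse p n) mod p"

end

theory Submission
  imports Defs
begin

text \<open>Write \<open>a = n\<^sub>i\<close>, \<open>b = n\<^sub>j\<close>, \<open>c = n\<^sub>k\<close>, \<open>u = \<lambda>\<^sub>i\<^sub>k\<close>. Minimality of \<open>a\<close> forces
  \<open>a + \<lambda>\<^sub>i\<^sub>j b + u c = b c\<close> with \<open>u \<ge> 1\<close>, so \<open>N\<^sub>i = a + (u - 1) c\<close>. Any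
  \<open>M c \<in> \<langle>a, b\<rangle>\<close> has a representation \<open>M c = r a + t b\<close> with \<open>0 \<le> r < b\<close>, and
  it is equivalent to \<open>(M + (u - 1) r) c = r N\<^sub>i + t b\<close>. Since \<open>N\<^sub>i \<equiv> -c (mod b)\<close> and
  \<open>c\<close> is invertible modulo \<open>b\<close>, the coefficient \<open>r\<close> is recovered from
  \<open>x = M + (u - 1) r\<close> as \<open>[-x]\<^sub>b\<close>, which makes \<open>M \<mapsto> x\<close> a bijection
  \<open>\<S>\<^sub>k \<rightarrow> \<T>\<^sub>k\<close> with inverse \<open>x \<mapsto> x - (u - 1)[-x]\<^sub>b\<close>.\<close>

lemma gen2_commute: "gen2 a b = gen2 b a"
  unfolding gen2_def by (auto simp: add.commute) (metis add.commute)+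

lemma gen2_intI:
  fixes a b s t :: int
  assumes "0 \<le> s" "0 \<le> t"
  shows "s * a + t * b \<in> gen2 a b"
  unfolding gen2_def using assms by (intro CollectI exI[of _ "nat s"] exI[of _ "nat t"]) simp

lemma gen2_iff_reduced:
  fixes a b z :: int
  assumes a: "0 \<le> a" and b: "0 < b"
  shows "z \<in> gen2 a b \<longleftrightarrow> (\<exists>r t. 0 \<le> r \<and> r < b \<and> 0 \<le> t \<and> z = r * a + t * b)"
proof
  assume "z \<in> gen2 a b"
  then obtain s t :: nat where z: "z = int s * a + int t * b"
    unfolding gen2_def by blast
  define q where "q = int s div b"
  have "int s = b * q + int s mod b"
    unfolding q_def by simp
  with z have "z = (b * q + int s mod b) * a + int t * b" by simp
  then have "z = (int s mod b) * a + (q * a + int t) * b"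
    by (simp add: algebra_simps)
  moreover have "0 \<le> q * a + int t"
    using a b unfolding q_def by (simp add: pos_imp_zdiv_nonneg_iff)
  ultimately show "\<exists>r t. 0 \<le> r \<and> r < b \<and> 0 \<le> t \<and> z = r * a + t * b"
    using b by (intro exI[of _ "int s mod b"] exI[of _ "q * a + int t"]) simp
qed (use gen2_intI in blast)

lemma lam_mult_cong:
  fixes m n p :: int
  assumes "coprime n p"
  shows "[lam m n p * n = - m] (mod p)"
proof -
  have "[lam m n p * n = - m * modular_inverse p n * n] (mod p)"
    unfolding lam_def by (intro cong_scalar_right) (simp add: cong_def)
  also have "[- m * modular_inverse p n * n = - m * 1] (mod p)"
    using cong_scalar_left[OF cong_modular_inverse2[OF assms], of "- m"]
    by (simp add: mult.assoc)
  finally show ?thesis by simp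
qed

lemma dvd_lam_mult_add:
  fixes m n p :: int
  assumes "coprime n p"
  shows "p dvd lam m n p * n + m"
  using lam_mult_cong[OF assms] by (metis cong_iff_dvd_diff diff_minus_eq_add)

text \<open>The identity \<open>n\<^sub>i = n\<^sub>j n\<^sub>k - \<lambda>\<^sub>i\<^sub>j n\<^sub>j - \<lambda>\<^sub>i\<^sub>k n\<^sub>k\<close>: the left-hand side minus the
  right-hand side is a multiple \<open>(t - 1) b c\<close> of \<open>b c\<close>, and \<open>t \<ge> 2\<close> would exhibit
  \<open>a\<close> as an element of \<open>\<langle>b, c\<rangle>\<close>.\<close>
lemma lam_decomposition:
  fixes a b c :: int
  assumes a: "0 < a" and b: "0 < b" and c: "0 < c" and bc: "coprime b c"
    and a_notin: "a \<notin> gen2 b c"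
  shows "a + lam a b c * b + lam a c b * c = b * c"
proof -
  define l u where "l = lam a b c" and "u = lam a c b"
  have l: "0 \<le> l" "l < c" and u: "0 \<le> u" "u < b"
    using b c unfolding l_def u_def lam_def by simp_all
  have "c dvd a + l * b + u * c"
    using dvd_lam_mult_add[of b c a] bc unfolding l_def by (simp add: coprime_commute add.commute)
  moreover have "b dvd (u * c + a) + l * b"
    using dvd_lam_mult_add[of c b a] bc unfolding u_def by (simp add: coprime_commute)
  then have "b dvd a + l * b + u * c" by (simp add: ac_simps)
  ultimately have "b * c dvd a + l * b + u * c"
    using bc by (simp add: divides_mult)
  then obtain t where t: "a + l * b + u * c = b * c * t" by blast
  have "t \<le> 1"
  proof (rule ccontr)
    assume "\<not> t \<le> 1"
    then have "b \<le> (t - 1) * b" using b by simp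
    then have "a = (c - l) * b + ((t - 1) * b - u) * c"
      using t by (simp add: algebra_simps)
    then have "a \<in> gen2 b c"
      using gen2_intI[of "c - l" "(t - 1) * b - u" b c] l u \<open>b \<le> (t - 1) * b\<close> by simp
    with a_notin show False ..
  qed
  moreover have "0 \<le> l * b" "0 \<le> u * c" using l u b c by simp_all
  then have "0 < b * c * t" using t a by linarith
  then have "0 < t" using zero_less_mult_pos[of "b * c" t] b c by simp
  ultimately show ?thesis using t unfolding l_def u_def by simp
qed

lemma lam_pos:
  fixes a b c :: int
  assumes "0 < a" "0 < b" "0 < c" "coprime b c" and a_notin: "a \<notin> gen2 b c"
  shows "0 < lam a c b"
proof (rule ccontr)
  assume "\<not> 0 < lam a c b"
  moreover have "0 \<le> lam a c b" using \<open>0 < b\<close> by (simp add: lam_def)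
  ultimately have "lam a c b = 0" by simp
  then have "a = (c - lam a b c) * b + 0 * c"
    using lam_decomposition[OF assms] by (simp add: algebra_simps)
  moreover have "0 \<le> c - lam a b c" using \<open>0 < c\<close> by (simp add: lam_def order_less_imp_le)
  ultimately have "a \<in> gen2 b c" using gen2_intI[of "c - lam a b c" 0 b c] by simp
  with a_notin show False ..
qed

lemma neg_mod_eq_coeff:
  fixes a b c u x r t :: int
  assumes bc: "coprime b c" and dvd: "b dvd a + u * c"
    and x: "x * c = r * (a + (u - 1) * c) + t * b" and r: "0 \<le> r" "r < b"
  shows "(- x) mod b = r"
proof -
  have "(x + r) * c = r * (a + u * c) + t * b"
    using x by (simp add: algebra_simps)
  moreover have "b dvd r * (a + u * c) + t * b"
    by (intro dvd_add dvd_mult[OF dvd] dvd_triv_right)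
  ultimately have "b dvd (x + r) * c" by simp
  then have "b dvd x + r" using bc coprime_dvd_mult_left_iff by blast
  then have "b dvd - (x + r)" by (simp only: dvd_minus_iff)
  then have "b dvd (- x) - r" by simp
  then have "(- x) mod b = r mod b" by (simp add: mod_eq_dvd_iff)
  then show ?thesis using r by simp
qed

lemma Sset_eq_image_shift:
  fixes a b c u :: int
  assumes a: "0 \<le> a" and b: "0 < b" and c: "0 < c" and bc: "coprime b c"
    and u: "1 \<le> u" and dvd: "b dvd a + u * c"
  shows "int ` Sset a b c =
    {int x - (u - 1) * ((- int x) mod b) | x. int x * c \<in> gen2 b (a + (u - 1) * c)}"
    (is "_ = {_ | x. int x * c \<in> gen2 b ?N}")
proof (intro equalityI subsetI)
  have shift: "m * c = r * a + t * b \<longleftrightarrow> (m + (u - 1) * r) * c = r * ?N + t * b"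
    for m r t :: int
    by (simp add: algebra_simps)
  fix y assume "y \<in> int ` Sset a b c"
  then obtain M where y: "y = int M" and "int M * c \<in> gen2 a b"
    unfolding Sset_def by blast
  then obtain r t where r: "0 \<le> r" "r < b" and "0 \<le> t" and Mc: "int M * c = r * a + t * b"
    using gen2_iff_reduced[OF a b] by blast
  define x where "x = int M + (u - 1) * r"
  have "0 \<le> x" using u r unfolding x_def by simp
  have xc: "x * c = r * ?N + t * b" using Mc shift unfolding x_def by blast
  then have "x * c \<in> gen2 b ?N"
    using gen2_intI[OF \<open>0 \<le> t\<close> r(1), of b ?N] by (simp add: add.commute)
  moreover have "y = x - (u - 1) * ((- x) mod b)"
    using neg_mod_eq_coeff[OF bc dvd xc r] y unfolding x_def by simp
  ultimately show "y \<in> {int x - (u - 1) * ((- int x) mod b) | x. int x * c \<in> gen2 b ?N}"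
    using \<open>0 \<le> x\<close> by (intro CollectI exI[of _ "nat x"]) simp
next
  have N: "0 \<le> ?N" using a u c by simp
  fix y assume "y \<in> {int x - (u - 1) * ((- int x) mod b) | x. int x * c \<in> gen2 b ?N}"
  then obtain x where y: "y = int x - (u - 1) * ((- int x) mod b)"
    and "int x * c \<in> gen2 ?N b" by (auto simp: gen2_commute)
  then obtain r t where r: "0 \<le> r" "r < b" and "0 \<le> t" and xc: "int x * c = r * ?N + t * b"
    using gen2_iff_reduced[OF N b] by blast
  define M where "M = int x - (u - 1) * r"
  have Mc: "M * c = r * a + t * b"
    using xc unfolding M_def by (simp add: algebra_simps)
  then have "0 \<le> M * c" using r \<open>0 \<le> t\<close> a b by simp
  then have "0 \<le> M" using c by (simp add: zero_le_mult_iff)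
  then have "nat M \<in> Sset a b c"
    using Mc gen2_intI[OF r(1) \<open>0 \<le> t\<close>, of a b] unfolding Sset_def by simp
  moreover have "y = int (nat M)"
    using neg_mod_eq_coeff[OF bc dvd xc r] y \<open>0 \<le> M\<close> unfolding M_def by simp
  ultimately show "y \<in> int ` Sset a b c" by blast
qed

theorem mainTheorem3:
  fixes n :: "nat \<Rightarrow> int" and i j k :: nat
  assumes pos: "\<And>l. l \<in> {1,2,3} \<Longrightarrow> n l > 0"
    and coprime: "\<And>l m. l \<in> {1,2,3} \<Longrightarrow> m \<in> {1,2,3} \<Longrightarrow> l \<noteq> m \<Longrightarrow> coprime (n l) (n m)"
    and minimal: "n 1 \<notin> gen2 (n 2) (n 3)" "n 2 \<notin> gen2 (n 1) (n 3)" "n 3 \<notin> gen2 (n 1) (n 2)"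
    and ijk: "{i, j, k} = {1, 2, 3}"
  shows "let lij = lam (n i) (n j) (n k);
             lik = lam (n i) (n k) (n j);
             Ni = n j * n k - lij * n j - n k;
             Tk = {x :: nat. int x * n k \<in> gen2 (n j) Ni}
         in int ` Sset (n i) (n j) (n k) =
            {int x - (lik - 1) * ((- int x) mod n j) | x. x \<in> Tk}"
proof -
  have mem: "i \<in> {1,2,3}" "j \<in> {1,2,3}" "k \<in> {1,2,3}" using ijk by blast+
  have "card {i, j, k} = 3" using ijk by simp
  then have dist: "i \<noteq> j" "i \<noteq> k" "j \<noteq> k" by (auto simp: card_insert_if split: if_splits)
  let ?a = "n i" and ?b = "n j" and ?c = "n k"
  have basics: "0 < ?a" "0 < ?b" "0 < ?c" "coprime ?b ?c"
    using pos mem coprime dist by auto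
  moreover have "?a \<notin> gen2 ?b ?c"
    using minimal mem dist by (auto simp: gen2_commute)
  ultimately have dec: "?a + lam ?a ?b ?c * ?b + lam ?a ?c ?b * ?c = ?b * ?c"
    and u: "0 < lam ?a ?c ?b"
    by (simp_all add: lam_decomposition lam_pos)
  then have N: "?b * ?c - lam ?a ?b ?c * ?b - ?c = ?a + (lam ?a ?c ?b - 1) * ?c"
    by (simp add: algebra_simps)
  have "?a + lam ?a ?c ?b * ?c = ?b * (?c - lam ?a ?b ?c)"
    using dec by (simp add: algebra_simps)
  then have dvd: "?b dvd ?a + lam ?a ?c ?b * ?c" by simp
  show ?thesis
    unfolding Let_def N mem_Collect_eq
    by (rule Sset_eq_image_shift[OF _ _ _ _ _ dvd]) (use basics u in simp_all)
qed

end
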